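(* Let $C$ be a closed cone with nonempty interior in a real Banach space and let $f:\operatorname{int} C \to \operatorname{int} C$ be subhomogeneous and type K order-preserving. For $\epsilon > 0$ let $f_\epsilon := f - \epsilon\, \mathrm{id}$. Then for any $x, y \in \operatorname{int} C$ there exists $\epsilon > 0$ small enough that $f_\epsilon(x), f_\epsilon(y) \in \operatorname{int} C$ and $$d_T(f_\epsilon(x), f_\epsilon(y)) \le d_T(x,y).$$
   Context: A closed cone is a closed convex set $C \subset X$ with $\lambda C \subset C$ for all $\lambda \ge 0$ and $C \cap (-C) = \{0\}$; $x \le y$ means $y - x \in C$. A map $f$ is subhomogeneous if $f(tx) \le t f(x)$ for all $t \ge 1$; it is type K order-preserving if for any $x \le y$ in its domain there exists $\epsilon > 0$ with $f(y) - f(x) \ge \epsilon (y - x)$. For $x, y \in C$, $M(x/y) := \inf\{\beta > 0 : x \le \beta y\}$. For $x,y\in\operatorname{int} C$, Thompson's metric is $d_T(x,y) := \max\{\log M(x/y), \log M(y/x)\}$. *)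

theory Defs
  imports "HOL-Analysis.Analysis"
begin

definition closed_cone :: "'a::real_normed_vector set \<Rightarrow> bool" where
  "closed_cone C \<longleftrightarrow> closed C \<and> convex C \<and> (\<forall>l::real. l \<ge> 0 \<longrightarrow> (\<forall>x\<in>C. l *\<^sub>R x \<in> C))
     \<and> C \<inter> uminus ` C = {0}"

definition cone_le :: "'a::real_vector set \<Rightarrow> 'a \<Rightarrow> 'a \<Rightarrow> bool" where
  "cone_le C x y \<longleftrightarrow> y - x \<in> C"

definition subhomogeneous_on :: "'a::real_vector set \<Rightarrow> 'a set \<Rightarrow> ('a \<Rightarrow> 'a) \<Rightarrow> bool" where
  "subhomogeneous_on C D f \<longleftrightarrow>
     (\<forall>x\<in>D. \<forall>t::real. t \<ge> 1 \<longrightarrow> t *\<^sub>R x \<in> D \<longrightarrow> cone_le C (f (t *\<^sub>R x)) (t *\<^sub>R f x))"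

definition typeK_order_preserving_on :: "'a::real_vector set \<Rightarrow> 'a set \<Rightarrow> ('a \<Rightarrow> 'a) \<Rightarrow> bool" where
  "typeK_order_preserving_on C D f \<longleftrightarrow>
     (\<forall>x\<in>D. \<forall>y\<in>D. cone_le C x y \<longrightarrow>
        (\<exists>\<epsilon>>0. cone_le C (\<epsilon> *\<^sub>R (y - x)) (f y - f x)))"

definition M_cone :: "'a::real_vector set \<Rightarrow> 'a \<Rightarrow> 'a \<Rightarrow> real" where
  "M_cone C x y = Inf {\<beta>::real. \<beta> > 0 \<and> cone_le C x (\<beta> *\<^sub>R y)}"

definition thompson_dist :: "'a::real_vector set \<Rightarrow> 'a \<Rightarrow> 'a \<Rightarrow> real" where
  "thompson_dist C x y = max (ln (M_cone C x y)) (ln (M_cone C y x))"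

end

theory Submission
  imports Defs
begin

(*
  Let b = max (M(x/y)) 1 and a = max (M(y/x)) 1, raised to 1 so that subhomogeneity applies.
  Since M(x/y) M(y/x) \<ge> 1, Thompson's metric is nonnegative and d_T(x,y) = max (ln b) (ln a).
  From x \<le> b y, subhomogeneity gives f(b y) \<le> b f(y), and type K order preservation gives
  f(b y) - f(x) \<ge> \<delta> (b y - x) for some \<delta> > 0; the slack \<delta> - \<epsilon> then yields
  f\<^sub>\<epsilon>(x) \<le> b f\<^sub>\<epsilon>(y) for 0 < \<epsilon> < \<delta>, and symmetrically f\<^sub>\<epsilon>(y) \<le> a f\<^sub>\<epsilon>(x).
  For small \<epsilon> both f\<^sub>\<epsilon>(x) and f\<^sub>\<epsilon>(y) stay in the open set int C, and then
  d_T(f\<^sub>\<epsilon> x, f\<^sub>\<epsilon> y) \<le> max (ln b) (ln a) = d_T(x,y).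
*)

lemma closed_cone_scaleR:
  assumes "closed_cone C" "0 \<le> t" "x \<in> C"
  shows "t *\<^sub>R x \<in> C"
  using assms unfolding closed_cone_def by auto

lemma closed_cone_add:
  assumes "closed_cone C" "x \<in> C" "y \<in> C"
  shows "x + y \<in> C"
proof -
  have "(1/2::real) *\<^sub>R x + (1/2::real) *\<^sub>R y \<in> C"
    using assms convexD[of C x y "1/2" "1/2"] unfolding closed_cone_def by auto
  then have "(2::real) *\<^sub>R ((1/2::real) *\<^sub>R x + (1/2::real) *\<^sub>R y) \<in> C"
    using closed_cone_scaleR[OF assms(1)] by simp
  then show ?thesis
    by (simp add: scaleR_add_right)
qed

lemma closed_cone_pointed:
  assumes "closed_cone C" "x \<in> C" "- x \<in> C"
  shows "x = 0"
proof -
  have "x \<in> uminus ` C"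
    using assms(3) by (metis image_eqI minus_minus)
  with assms show ?thesis
    unfolding closed_cone_def by blast
qed

lemma interior_closed_cone_scaleR:
  assumes "closed_cone C" "0 < t" "x \<in> interior C"
  shows "t *\<^sub>R x \<in> interior C"
proof -
  have "(*\<^sub>R) t ` interior C \<subseteq> interior C"
  proof (rule interior_maximal)
    show "(*\<^sub>R) t ` interior C \<subseteq> C"
      using assms(2) by (auto intro!: closed_cone_scaleR[OF assms(1)] dest: subsetD[OF interior_subset])
    show "open ((*\<^sub>R) t ` interior C)"
      using open_scaling assms(2) by auto
  qed
  with assms(3) show ?thesis
    by auto
qed

lemma eventually_diff_scaleR_in_interior:
  fixes v w :: "'a::real_normed_vector"
  assumes "v \<in> interior S"
  shows "\<forall>\<^sub>F \<epsilon> in at_right 0. v - \<epsilon> *\<^sub>R w \<in> interior S"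
proof -
  have "((\<lambda>\<epsilon>. v - \<epsilon> *\<^sub>R w) \<longlongrightarrow> v) (at_right (0::real))"
    by (auto intro!: tendsto_eq_intros)
  then show ?thesis
    using topological_tendstoD open_interior assms by blast
qed

lemma cone_le_trans:
  assumes "closed_cone C" "cone_le C x y" "cone_le C y z"
  shows "cone_le C x z"
  using closed_cone_add[OF assms(1) assms(3,2)[unfolded cone_le_def]]
  unfolding cone_le_def by (simp add: algebra_simps)

lemma cone_le_scaleR:
  assumes "closed_cone C" "0 \<le> t" "cone_le C x y"
  shows "cone_le C (t *\<^sub>R x) (t *\<^sub>R y)"
  using closed_cone_scaleR[OF assms(1,2) assms(3)[unfolded cone_le_def]]
  unfolding cone_le_def by (simp add: scaleR_diff_right)

lemma cone_le_scaleR_interior: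
  assumes "closed_cone C" "v \<in> interior C"
  shows "\<exists>t>0. cone_le C u (t *\<^sub>R v)"
proof -
  have "\<forall>\<^sub>F \<epsilon> in at_right (0::real). v - \<epsilon> *\<^sub>R u \<in> interior C \<and> 0 < \<epsilon>"
    using eventually_diff_scaleR_in_interior[OF assms(2)] eventually_at_right_less
    by (rule eventually_conj)
  then obtain \<epsilon> :: real where \<epsilon>: "v - \<epsilon> *\<^sub>R u \<in> C" "0 < \<epsilon>"
    using eventually_happens'[OF trivial_limit_at_right_real] interior_subset by blast
  then have "inverse \<epsilon> *\<^sub>R (v - \<epsilon> *\<^sub>R u) \<in> C"
    by (intro closed_cone_scaleR[OF assms(1)]) auto
  with \<epsilon>(2) show ?thesis
    by (intro exI[of _ "inverse \<epsilon>"]) (simp add: cone_le_def scaleR_diff_right)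
qed

lemma closed_cone_trivial_if_zero_interior:
  fixes C :: "'a::real_normed_vector set" and x :: 'a
  assumes "closed_cone C" "0 \<in> interior C"
  shows "x = 0"
proof -
  have "- z \<in> C" for z
    using cone_le_scaleR_interior[OF assms, of z] by (auto simp: cone_le_def)
  from this[of x] this[of "- x"] show ?thesis
    using closed_cone_pointed[OF assms(1)] by simp
qed

lemma M_cone_attained:
  assumes cc: "closed_cone C" and u: "u \<in> C" "u \<noteq> 0" and v: "v \<in> interior C"
  shows "0 < M_cone C u v \<and> cone_le C u (M_cone C u v *\<^sub>R v)"
proof -
  define T where "T = {t::real. 0 \<le> t \<and> cone_le C u (t *\<^sub>R v)}"
  have "0 \<notin> T"
    using closed_cone_pointed[OF cc u(1)] u(2) unfolding T_def cone_le_def by auto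
  then have M: "M_cone C u v = Inf T"
    unfolding M_cone_def T_def by (metis (full_types) less_le mem_Collect_eq)
  have "closed ({0..} \<inter> (\<lambda>t::real. t *\<^sub>R v - u) -` C)"
    using cc unfolding closed_cone_def
    by (intro closed_Int closed_atLeast continuous_closed_vimage) (auto intro!: continuous_intros)
  moreover have "{0..} \<inter> (\<lambda>t::real. t *\<^sub>R v - u) -` C = T"
    unfolding T_def cone_le_def by auto
  ultimately have "closed T"
    by simp
  moreover have "T \<noteq> {}"
    using cone_le_scaleR_interior[OF cc v, of u] unfolding T_def by force
  moreover have "bdd_below T"
    unfolding T_def by (rule bdd_belowI[of _ 0]) auto
  ultimately have "Inf T \<in> T"
    by (rule closed_contains_Inf[rotated 2])
  with \<open>0 \<notin> T\<close> show ?thesis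
    unfolding M T_def by (metis (mono_tags) less_le mem_Collect_eq)
qed

lemma M_cone_le:
  assumes "0 < \<beta>" "cone_le C u (\<beta> *\<^sub>R v)"
  shows "M_cone C u v \<le> \<beta>"
  unfolding M_cone_def by (rule cInf_lower) (use assms in \<open>auto intro: bdd_belowI[of _ 0]\<close>)

lemma cone_le_scaleR_if_M_cone_le:
  assumes cc: "closed_cone C" and u: "u \<in> C" "u \<noteq> 0" and v: "v \<in> interior C"
    and b: "M_cone C u v \<le> b"
  shows "cone_le C u (b *\<^sub>R v)"
proof -
  have "cone_le C (M_cone C u v *\<^sub>R v) (b *\<^sub>R v)"
    using closed_cone_scaleR[OF cc _ subsetD[OF interior_subset v], of "b - M_cone C u v"] b
    unfolding cone_le_def by (simp add: scaleR_left_diff_distrib)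
  with M_cone_attained[OF cc u v] show ?thesis
    using cone_le_trans[OF cc] by blast
qed

lemma M_cone_mult_ge_one:
  assumes cc: "closed_cone C" and x: "x \<in> interior C" "x \<noteq> 0" and y: "y \<in> interior C" "y \<noteq> 0"
  shows "1 \<le> M_cone C y x * M_cone C x y"
proof (rule ccontr)
  define \<alpha> \<beta> where "\<alpha> = M_cone C y x" and "\<beta> = M_cone C x y"
  assume "\<not> 1 \<le> M_cone C y x * M_cone C x y"
  then have lt: "\<alpha> * \<beta> < 1"
    unfolding \<alpha>_def \<beta>_def by simp
  have xC: "x \<in> C" and yC: "y \<in> C"
    using x y interior_subset by auto
  have "cone_le C x (\<beta> *\<^sub>R y)" "0 < \<beta>"
    using M_cone_attained[OF cc xC x(2) y(1)] unfolding \<beta>_def by auto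
  moreover have "cone_le C (\<beta> *\<^sub>R y) (\<beta> *\<^sub>R (\<alpha> *\<^sub>R x))"
    using M_cone_attained[OF cc yC y(2) x(1)] \<open>0 < \<beta>\<close> unfolding \<alpha>_def
    by (intro cone_le_scaleR[OF cc]) auto
  ultimately have "(\<alpha> * \<beta>) *\<^sub>R x - x \<in> C"
    using cone_le_trans[OF cc] unfolding cone_le_def by (simp add: mult.commute)
  moreover have "(1 - \<alpha> * \<beta>) *\<^sub>R x \<in> C"
    using closed_cone_scaleR[OF cc _ xC] lt by simp
  ultimately have "(1 - \<alpha> * \<beta>) *\<^sub>R x = 0"
    using closed_cone_pointed[OF cc] by (metis minus_diff_eq scaleR_left_diff_distrib scaleR_one)
  with lt x(2) show False
    by simp
qed

lemma thompson_dist_eq_ln_max_one: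
  assumes cc: "closed_cone C" and x: "x \<in> interior C" "x \<noteq> 0" and y: "y \<in> interior C" "y \<noteq> 0"
  shows "thompson_dist C x y = max (ln (max (M_cone C x y) 1)) (ln (max (M_cone C y x) 1))"
proof -
  define \<alpha> \<beta> where "\<alpha> = M_cone C y x" and "\<beta> = M_cone C x y"
  have pos: "0 < \<alpha>" "0 < \<beta>"
    using M_cone_attained[OF cc _ x(2) y(1)] M_cone_attained[OF cc _ y(2) x(1)] x y interior_subset
    unfolding \<alpha>_def \<beta>_def by auto
  have "0 \<le> ln (\<alpha> * \<beta>)"
    using M_cone_mult_ge_one[OF cc x y] unfolding \<alpha>_def \<beta>_def by simp
  then have "0 \<le> ln \<alpha> + ln \<beta>"
    using pos by (simp add: ln_mult)
  moreover have "ln (max t 1) = max (ln t) 0" if "0 < t" for t :: real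
    using that by (simp add: max_def)
  ultimately show ?thesis
    using pos unfolding thompson_dist_def \<alpha>_def[symmetric] \<beta>_def[symmetric] by auto
qed

lemma thompson_dist_le:
  assumes cc: "closed_cone C" and u: "u \<in> interior C" "u \<noteq> 0" and w: "w \<in> interior C" "w \<noteq> 0"
    and uw: "0 < b" "cone_le C u (b *\<^sub>R w)" and wu: "0 < a" "cone_le C w (a *\<^sub>R u)"
  shows "thompson_dist C u w \<le> max (ln b) (ln a)"
proof -
  have "0 < M_cone C u w" "0 < M_cone C w u"
    using M_cone_attained[OF cc _ u(2) w(1)] M_cone_attained[OF cc _ w(2) u(1)] u w interior_subset
    by auto
  moreover have "M_cone C u w \<le> b" "M_cone C w u \<le> a"
    using uw wu by (auto intro: M_cone_le)
  ultimately show ?thesis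
    unfolding thompson_dist_def by (auto simp: max_def)
qed

lemma eventually_cone_le_perturbed:
  assumes cc: "closed_cone C"
    and sh: "subhomogeneous_on C (interior C) f"
    and tk: "typeK_order_preserving_on C (interior C) f"
    and x: "x \<in> interior C" and y: "y \<in> interior C" and b: "1 \<le> b" and xy: "cone_le C x (b *\<^sub>R y)"
  shows "\<forall>\<^sub>F \<epsilon> in at_right 0. cone_le C (f x - \<epsilon> *\<^sub>R x) (b *\<^sub>R (f y - \<epsilon> *\<^sub>R y))"
proof -
  have by_int: "b *\<^sub>R y \<in> interior C"
    using interior_closed_cone_scaleR[OF cc _ y] b by auto
  obtain \<delta> where \<delta>: "0 < \<delta>" "(f (b *\<^sub>R y) - f x) - \<delta> *\<^sub>R (b *\<^sub>R y - x) \<in> C"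
    using tk x by_int y xy unfolding typeK_order_preserving_on_def cone_le_def by blast
  have sub: "b *\<^sub>R f y - f (b *\<^sub>R y) \<in> C"
    using sh y b by_int unfolding subhomogeneous_on_def cone_le_def by blast
  have "cone_le C (f x - \<epsilon> *\<^sub>R x) (b *\<^sub>R (f y - \<epsilon> *\<^sub>R y))" if "0 < \<epsilon>" "\<epsilon> < \<delta>" for \<epsilon>
  proof -
    have "(\<delta> - \<epsilon>) *\<^sub>R (b *\<^sub>R y - x) \<in> C"
      using closed_cone_scaleR[OF cc _ xy[unfolded cone_le_def]] that by auto
    then have "(b *\<^sub>R f y - f (b *\<^sub>R y)) + ((f (b *\<^sub>R y) - f x) - \<delta> *\<^sub>R (b *\<^sub>R y - x))
        + (\<delta> - \<epsilon>) *\<^sub>R (b *\<^sub>R y - x) \<in> C"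
      using closed_cone_add[OF cc closed_cone_add[OF cc sub \<delta>(2)]] by blast
    then show ?thesis
      unfolding cone_le_def by (simp add: algebra_simps)
  qed
  then show ?thesis
    unfolding eventually_at_right_field using \<delta>(1) by auto
qed

theorem mainTheorem2:
  fixes C :: "'a::banach set" and f :: "'a \<Rightarrow> 'a"
  assumes "closed_cone C"
    and "interior C \<noteq> {}"
    and "f ` interior C \<subseteq> interior C"
    and "subhomogeneous_on C (interior C) f"
    and "typeK_order_preserving_on C (interior C) f"
  shows "\<forall>x\<in>interior C. \<forall>y\<in>interior C. \<exists>\<epsilon>::real>0.
           f x - \<epsilon> *\<^sub>R x \<in> interior C \<and> f y - \<epsilon> *\<^sub>R y \<in> interior C \<and>
           thompson_dist C (f x - \<epsilon> *\<^sub>R x) (f y - \<epsilon> *\<^sub>R y) \<le> thompson_dist C x y"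
proof (intro ballI)
  note cc = assms(1)
  fix x y assume x: "x \<in> interior C" and y: "y \<in> interior C"
  show "\<exists>\<epsilon>::real>0. f x - \<epsilon> *\<^sub>R x \<in> interior C \<and> f y - \<epsilon> *\<^sub>R y \<in> interior C \<and>
           thompson_dist C (f x - \<epsilon> *\<^sub>R x) (f y - \<epsilon> *\<^sub>R y) \<le> thompson_dist C x y"
  proof (cases "0 \<in> interior C")
    case True
    then have "\<And>z::'a. z = 0"
      using closed_cone_trivial_if_zero_interior[OF cc] by blast
    with True show ?thesis
      by (metis order_refl zero_less_one)
  next
    case False
    then have nz: "z \<noteq> 0" if "z \<in> interior C" for z
      using that by auto
    define b a where "b = max (M_cone C x y) 1" and "a = max (M_cone C y x) 1"
    have "cone_le C x (b *\<^sub>R y)" "cone_le C y (a *\<^sub>R x)"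
      unfolding a_def b_def using x y interior_subset nz
      by (auto intro!: cone_le_scaleR_if_M_cone_le[OF cc])
    then have "\<forall>\<^sub>F \<epsilon> in at_right 0. 0 < \<epsilon> \<and>
        f x - \<epsilon> *\<^sub>R x \<in> interior C \<and> f y - \<epsilon> *\<^sub>R y \<in> interior C \<and>
        cone_le C (f x - \<epsilon> *\<^sub>R x) (b *\<^sub>R (f y - \<epsilon> *\<^sub>R y)) \<and>
        cone_le C (f y - \<epsilon> *\<^sub>R y) (a *\<^sub>R (f x - \<epsilon> *\<^sub>R x))"
      using x y assms(3) unfolding a_def b_def
      by (intro eventually_conj eventually_at_right_less eventually_diff_scaleR_in_interior
          eventually_cone_le_perturbed[OF cc assms(4,5)]) auto
    then obtain \<epsilon> :: real where \<epsilon>: "0 < \<epsilon>"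
        "f x - \<epsilon> *\<^sub>R x \<in> interior C" "f y - \<epsilon> *\<^sub>R y \<in> interior C"
        "cone_le C (f x - \<epsilon> *\<^sub>R x) (b *\<^sub>R (f y - \<epsilon> *\<^sub>R y))"
        "cone_le C (f y - \<epsilon> *\<^sub>R y) (a *\<^sub>R (f x - \<epsilon> *\<^sub>R x))"
      using eventually_happens'[OF trivial_limit_at_right_real] by blast
    have "thompson_dist C (f x - \<epsilon> *\<^sub>R x) (f y - \<epsilon> *\<^sub>R y) \<le> max (ln b) (ln a)"
      by (rule thompson_dist_le[OF cc \<epsilon>(2) nz[OF \<epsilon>(2)] \<epsilon>(3) nz[OF \<epsilon>(3)] _ \<epsilon>(4) _ \<epsilon>(5)])
        (simp_all add: a_def b_def)
    also have "\<dots> = thompson_dist C x y"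
      unfolding a_def b_def using thompson_dist_eq_ln_max_one[OF cc x nz[OF x] y nz[OF y]] by simp
    finally show ?thesis
      using \<epsilon>(1-3) by blast
  qed
qed

end
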